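(* Let $G$ be an arbitrary group and let $S=\bigoplus_{g\in G}S_g$ be an epsilon-strongly $G$-graded ring with principal component $R=S_e$. If $\mathrm{Supp}(S)$ is finite and $R$ is left (respectively right) artinian, then $S$ is left (respectively right) artinian.
   Context: All rings are associative with multiplicative identity $1\neq 0$. A ring $S$ is $G$-graded if $S=\bigoplus_{g\in G}S_g$ for additive subgroups $S_g$ with $S_gS_h\subseteq S_{gh}$ for all $g,h\in G$; $S_e$ is the principal component, and $\mathrm{Supp}(S)=\{g\in G:S_g\neq\{0\}\}$. $S$ is epsilon-strongly $G$-graded if (a) $S_gS_{g^{-1}}S_g=S_g$ for all $g\in G$, and (b) for each $g\in G$ the ideal $S_gS_{g^{-1}}$ of $S_e$ has a multiplicative identity. *)

theory Defs
  imports Main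
begin

text \<open>The ring S is the whole type 'a (class ring_1, which includes 1 \<noteq> 0).
  The group G is a type 'g of class group_add (written additively: g + h is the
  group product, 0 the identity e, - g the inverse).\<close>

definition additive_subgroup :: "'a::ring_1 set \<Rightarrow> bool" where
  "additive_subgroup A \<longleftrightarrow> 0 \<in> A \<and> (\<forall>x\<in>A. \<forall>y\<in>A. x - y \<in> A)"

definition setmul :: "'a::ring_1 set \<Rightarrow> 'a set \<Rightarrow> 'a set" where
  "setmul A B = {x. \<exists>(n::nat) a b. (\<forall>i<n. a i \<in> A \<and> b i \<in> B) \<and> x = (\<Sum>i<n. a i * b i)}"

definition graded_ring :: "('g::group_add \<Rightarrow> 'a::ring_1 set) \<Rightarrow> bool" where
  "graded_ring S \<longleftrightarrow>
     (\<forall>g. additive_subgroup (S g)) \<and>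
     (\<forall>g h. \<forall>x\<in>S g. \<forall>y\<in>S h. x * y \<in> S (g + h)) \<and>
     (\<forall>x::'a. \<exists>!f. finite {g. f g \<noteq> 0} \<and> (\<forall>g. f g \<in> S g) \<and>
                   x = (\<Sum>g\<in>{g. f g \<noteq> 0}. f g))"

definition has_mult_identity :: "'a::ring_1 set \<Rightarrow> bool" where
  "has_mult_identity I \<longleftrightarrow> (\<exists>u\<in>I. \<forall>x\<in>I. u * x = x \<and> x * u = x)"

definition epsilon_strongly_graded :: "('g::group_add \<Rightarrow> 'a::ring_1 set) \<Rightarrow> bool" where
  "epsilon_strongly_graded S \<longleftrightarrow> graded_ring S \<and>
     (\<forall>g. setmul (setmul (S g) (S (- g))) (S g) = S g) \<and>
     (\<forall>g. has_mult_identity (setmul (S g) (S (- g))))"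

definition support :: "('g \<Rightarrow> 'a::ring_1 set) \<Rightarrow> 'g set" where
  "support S = {g. S g \<noteq> {0}}"

definition left_ideal_of :: "'a::ring_1 set \<Rightarrow> 'a set \<Rightarrow> bool" where
  "left_ideal_of R I \<longleftrightarrow> I \<subseteq> R \<and> additive_subgroup I \<and> (\<forall>r\<in>R. \<forall>x\<in>I. r * x \<in> I)"

definition right_ideal_of :: "'a::ring_1 set \<Rightarrow> 'a set \<Rightarrow> bool" where
  "right_ideal_of R I \<longleftrightarrow> I \<subseteq> R \<and> additive_subgroup I \<and> (\<forall>r\<in>R. \<forall>x\<in>I. x * r \<in> I)"

definition left_artinian :: "'a::ring_1 set \<Rightarrow> bool" where
  "left_artinian R \<longleftrightarrow> (\<forall>I :: nat \<Rightarrow> 'a set.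
     (\<forall>n. left_ideal_of R (I n)) \<and> (\<forall>n. I (Suc n) \<subseteq> I n) \<longrightarrow> (\<exists>N. \<forall>n\<ge>N. I n = I N))"

definition right_artinian :: "'a::ring_1 set \<Rightarrow> bool" where
  "right_artinian R \<longleftrightarrow> (\<forall>I :: nat \<Rightarrow> 'a set.
     (\<forall>n. right_ideal_of R (I n)) \<and> (\<forall>n. I (Suc n) \<subseteq> I n) \<longrightarrow> (\<exists>N. \<forall>n\<ge>N. I n = I N))"

end

theory Submission
  imports Defs
begin

text \<open>For each g in the support, condition (a) and the identity of the ideal S_{-g} S_g yield
  finitely many c_i \<in> S_{-g} and d_i \<in> S_g with s = \<Sum>_i (s c_i) d_i for all s \<in> S_g. Hence the
  finitely many maps x \<mapsto> x_g c_i from S to R = S_0, which are R-linear for the left action of R,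
  have trivial common kernel: S embeds into a finite direct sum of copies of R. Left ideals of S
  are R-submodules, and the descending chain condition passes from R to such an S by induction
  on the number of maps, since a descending chain of submodules stabilizes as soon as both its
  image and its kernel under one map do. The right-handed case uses the maps x \<mapsto> d_i x_g.\<close>

lemma additive_subgroup_zero: "additive_subgroup A \<Longrightarrow> 0 \<in> A"
  unfolding additive_subgroup_def by blast

lemma additive_subgroup_diff: "additive_subgroup A \<Longrightarrow> x \<in> A \<Longrightarrow> y \<in> A \<Longrightarrow> x - y \<in> A"
  unfolding additive_subgroup_def by blast

lemma additive_subgroup_add: "additive_subgroup A \<Longrightarrow> x \<in> A \<Longrightarrow> y \<in> A \<Longrightarrow> x + y \<in> A"
  using additive_subgroup_diff[of A x "0 - y"] additive_subgroup_diff[of A 0 y]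
    additive_subgroup_zero[of A] by simp

definition dcc :: "('a set \<Rightarrow> bool) \<Rightarrow> bool" where
  "dcc P \<longleftrightarrow> (\<forall>I :: nat \<Rightarrow> 'a set.
     (\<forall>n. P (I n)) \<and> (\<forall>n. I (Suc n) \<subseteq> I n) \<longrightarrow> (\<exists>N. \<forall>n\<ge>N. I n = I N))"

lemma dccD: "dcc P \<Longrightarrow> (\<And>n. P (I n)) \<Longrightarrow> (\<And>n. I (Suc n) \<subseteq> I n) \<Longrightarrow> \<exists>N. \<forall>n\<ge>N. I n = I N"
  unfolding dcc_def by blast

lemma dcc_mono: "dcc Q \<Longrightarrow> (\<And>A. P A \<Longrightarrow> Q A) \<Longrightarrow> dcc P"
  unfolding dcc_def by blast

definition submodule :: "'r set \<Rightarrow> ('r \<Rightarrow> 'a::ring_1 \<Rightarrow> 'a) \<Rightarrow> 'a set \<Rightarrow> bool" where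
  "submodule R act A \<longleftrightarrow> additive_subgroup A \<and> (\<forall>r\<in>R. \<forall>x\<in>A. act r x \<in> A)"

definition module_hom :: "'r set \<Rightarrow> ('r \<Rightarrow> 'a::ring_1 \<Rightarrow> 'a) \<Rightarrow> ('a \<Rightarrow> 'a) \<Rightarrow> bool" where
  "module_hom R act f \<longleftrightarrow>
     (\<forall>x y. f (x - y) = f x - f y) \<and> (\<forall>r\<in>R. \<forall>x. f (act r x) = act r (f x))"

lemma left_artinian_iff_dcc: "left_artinian R \<longleftrightarrow> dcc (\<lambda>A. A \<subseteq> R \<and> submodule R (*) A)"
  unfolding left_artinian_def left_ideal_of_def dcc_def submodule_def by simp

lemma right_artinian_iff_dcc:
  "right_artinian R \<longleftrightarrow> dcc (\<lambda>A. A \<subseteq> R \<and> submodule R (\<lambda>r x. x * r) A)"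
  unfolding right_artinian_def right_ideal_of_def dcc_def submodule_def by simp

lemma submodule_image:
  assumes "submodule R act A" "module_hom R act f"
  shows "submodule R act (f ` A)"
proof -
  have f_diff: "f (x - y) = f x - f y" for x y
    using assms(2) unfolding module_hom_def by blast
  have "additive_subgroup (f ` A)"
    unfolding additive_subgroup_def
  proof (intro conjI ballI)
    have "0 \<in> A"
      using assms(1) additive_subgroup_zero unfolding submodule_def by blast
    then show "0 \<in> f ` A"
      using f_diff[of 0 0] by (simp add: rev_image_eqI)
  next
    fix u v assume "u \<in> f ` A" "v \<in> f ` A"
    then obtain x y where "x \<in> A" "y \<in> A" "u = f x" "v = f y"
      by blast
    moreover have "x - y \<in> A"
      using assms(1) \<open>x \<in> A\<close> \<open>y \<in> A\<close> additive_subgroup_diff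
      unfolding submodule_def by blast
    ultimately show "u - v \<in> f ` A"
      using f_diff[of x y] by (simp add: rev_image_eqI)
  qed
  moreover have "act r u \<in> f ` A" if "r \<in> R" "u \<in> f ` A" for r u
  proof -
    obtain x where "x \<in> A" "u = f x"
      using \<open>u \<in> f ` A\<close> by blast
    then have "act r u = f (act r x)" "act r x \<in> A"
      using that assms unfolding submodule_def module_hom_def by simp_all
    then show ?thesis
      by blast
  qed
  ultimately show ?thesis
    unfolding submodule_def by blast
qed

lemma submodule_kernel:
  assumes "submodule R act A" "module_hom R act f" "\<And>r. act r 0 = 0"
  shows "submodule R act {x \<in> A. f x = 0}"
proof -
  have f_diff: "f (x - y) = f x - f y" and f_act: "r \<in> R \<Longrightarrow> f (act r x) = act r (f x)" for r x y
    using assms(2) unfolding module_hom_def by blast+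
  have "additive_subgroup {x \<in> A. f x = 0}"
    using assms(1) f_diff[of 0 0] additive_subgroup_zero additive_subgroup_diff f_diff
    unfolding submodule_def additive_subgroup_def by simp
  moreover have "act r x \<in> {x \<in> A. f x = 0}" if "r \<in> R" "x \<in> {x \<in> A. f x = 0}" for r x
    using that assms(1,3) f_act unfolding submodule_def by simp
  ultimately show ?thesis
    unfolding submodule_def by blast
qed

lemma chain_stabilizes_if_image_and_kernel_stabilize:
  fixes M :: "nat \<Rightarrow> 'a::ring_1 set" and f :: "'a \<Rightarrow> 'b::ab_group_add"
  assumes M: "\<And>n. additive_subgroup (M n)" "\<And>n. M (Suc n) \<subseteq> M n"
    and f_diff: "\<And>x y. f (x - y) = f x - f y"
    and "\<exists>N. \<forall>n\<ge>N. f ` M n = f ` M N"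
    and "\<exists>N. \<forall>n\<ge>N. {x \<in> M n. f x = 0} = {x \<in> M N. f x = 0}"
  shows "\<exists>N. \<forall>n\<ge>N. M n = M N"
proof -
  obtain N1 N2 where image: "\<forall>n\<ge>N1. f ` M n = f ` M N1"
    and kernel: "\<forall>n\<ge>N2. {x \<in> M n. f x = 0} = {x \<in> M N2. f x = 0}"
    using assms(4,5) by blast
  define K where "K = max N1 N2"
  have "M n = M K" if "K \<le> n" for n
  proof -
    from that have "N1 \<le> n" "N1 \<le> K" "N2 \<le> n" "N2 \<le> K"
      unfolding K_def by auto
    have "M n \<subseteq> M K"
      using lift_Suc_antimono_le[of M, OF M(2) \<open>K \<le> n\<close>] .
    moreover have "x \<in> M n" if x: "x \<in> M K" for x
    proof -
      have "f x \<in> f ` M n"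
        using x image \<open>N1 \<le> n\<close> \<open>N1 \<le> K\<close> by (metis imageI)
      then obtain y where y: "y \<in> M n" "f y = f x"
        by (metis imageE)
      then have "x - y \<in> {z \<in> M K. f z = 0}"
        using x \<open>M n \<subseteq> M K\<close> additive_subgroup_diff[OF M(1)] f_diff by auto
      then have "x - y \<in> M n"
        using kernel \<open>N2 \<le> n\<close> \<open>N2 \<le> K\<close> by blast
      then show "x \<in> M n"
        using additive_subgroup_add[OF M(1) _ y(1)] by fastforce
    qed
    ultimately show "M n = M K"
      by blast
  qed
  then show ?thesis
    by blast
qed

lemma dcc_submodules_separated_by_homs:
  fixes F :: "('a::ring_1 \<Rightarrow> 'a) set"
  assumes "finite F"
    and dcc_T: "dcc (\<lambda>A. A \<subseteq> T \<and> submodule R act A)"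
    and "\<forall>f\<in>F. module_hom R act f \<and> range f \<subseteq> T"
    and act_zero: "\<And>r. act r 0 = 0"
  shows "dcc (\<lambda>A. submodule R act A \<and> (\<forall>x\<in>A. (\<forall>f\<in>F. f x = 0) \<longrightarrow> x = 0))"
  using assms(1,3)
proof (induction F rule: finite_induct)
  case empty
  have "A = {0}" if "submodule R act A" "\<forall>x\<in>A. x = 0" for A :: "'a set"
    using that additive_subgroup_zero unfolding submodule_def by blast
  then show ?case
    unfolding dcc_def by (metis empty_iff)
next
  case (insert f F)
  show ?case
    unfolding dcc_def
  proof (intro allI impI)
    fix M :: "nat \<Rightarrow> 'a set"
    assume "(\<forall>n. submodule R act (M n) \<and> (\<forall>x\<in>M n. (\<forall>g\<in>insert f F. g x = 0) \<longrightarrow> x = 0))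
      \<and> (\<forall>n. M (Suc n) \<subseteq> M n)"
    then have M: "\<And>n. submodule R act (M n)" "\<And>n. M (Suc n) \<subseteq> M n"
      and separated: "\<And>n x. x \<in> M n \<Longrightarrow> \<forall>g\<in>insert f F. g x = 0 \<Longrightarrow> x = 0"
      by blast+
    have f: "module_hom R act f" "range f \<subseteq> T"
      using insert.prems by simp_all
    have image_stable: "\<exists>N. \<forall>n\<ge>N. f ` M n = f ` M N"
    proof (rule dccD[OF dcc_T])
      show "f ` M n \<subseteq> T \<and> submodule R act (f ` M n)" for n
        using f submodule_image[OF M(1) f(1)] by blast
      show "f ` M (Suc n) \<subseteq> f ` M n" for n
        using M(2) by (rule image_mono)
    qed
    have kernel_stable: "\<exists>N. \<forall>n\<ge>N. {x \<in> M n. f x = 0} = {x \<in> M N. f x = 0}"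
    proof (rule dccD[OF insert.IH])
      show "\<forall>g\<in>F. module_hom R act g \<and> range g \<subseteq> T"
        using insert.prems by simp
      show "submodule R act {x \<in> M n. f x = 0}
          \<and> (\<forall>x\<in>{x \<in> M n. f x = 0}. (\<forall>g\<in>F. g x = 0) \<longrightarrow> x = 0)" for n
        using submodule_kernel[OF M(1) f(1) act_zero] separated by auto
      show "{x \<in> M (Suc n). f x = 0} \<subseteq> {x \<in> M n. f x = 0}" for n
        using M(2) by blast
    qed
    have "f (x - y) = f x - f y" for x y
      using f(1) unfolding module_hom_def by blast
    moreover have "additive_subgroup (M n)" for n
      using M(1) unfolding submodule_def by blast
    ultimately show "\<exists>N. \<forall>n\<ge>N. M n = M N"
      using chain_stabilizes_if_image_and_kernel_stabilize[of M f] M(2)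
        image_stable kernel_stable by blast
  qed
qed

definition component :: "('g::group_add \<Rightarrow> 'a::ring_1 set) \<Rightarrow> 'a \<Rightarrow> 'g \<Rightarrow> 'a" where
  "component S x =
     (THE f. finite {g. f g \<noteq> 0} \<and> (\<forall>g. f g \<in> S g) \<and> x = (\<Sum>g\<in>{g. f g \<noteq> 0}. f g))"

lemma graded_ring_additive_subgroup: "graded_ring S \<Longrightarrow> additive_subgroup (S g)"
  unfolding graded_ring_def by blast

lemma graded_ring_mult: "graded_ring S \<Longrightarrow> x \<in> S g \<Longrightarrow> y \<in> S h \<Longrightarrow> x * y \<in> S (g + h)"
  unfolding graded_ring_def by blast

lemma component_props:
  assumes "graded_ring S"
  shows "finite {g. component S x g \<noteq> 0}" "component S x g \<in> S g"
    "x = (\<Sum>g\<in>{g. component S x g \<noteq> 0}. component S x g)"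
proof -
  have "\<exists>!f. finite {g. f g \<noteq> 0} \<and> (\<forall>g. f g \<in> S g) \<and> x = (\<Sum>g\<in>{g. f g \<noteq> 0}. f g)"
    using assms unfolding graded_ring_def by blast
  from theI'[OF this] show "finite {g. component S x g \<noteq> 0}" "component S x g \<in> S g"
    "x = (\<Sum>g\<in>{g. component S x g \<noteq> 0}. component S x g)"
    unfolding component_def by blast+
qed

lemma sum_components:
  assumes "graded_ring S" "finite A" "{g. component S x g \<noteq> 0} \<subseteq> A"
  shows "x = (\<Sum>g\<in>A. component S x g)"
proof -
  have "(\<Sum>g\<in>A. component S x g) = (\<Sum>g\<in>{g. component S x g \<noteq> 0}. component S x g)"
    by (rule sum.mono_neutral_right[OF assms(2,3)]) simp
  then show ?thesis
    using component_props(3)[OF assms(1), of x] by simp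
qed

lemma component_eqI:
  assumes "graded_ring S" "finite A" "\<And>g. f g \<in> S g" "\<And>g. g \<notin> A \<Longrightarrow> f g = 0"
    and "x = (\<Sum>g\<in>A. f g)"
  shows "component S x = f"
proof -
  have support_f: "{g. f g \<noteq> 0} \<subseteq> A"
    using assms(4) by blast
  have "finite {g. f g \<noteq> 0}"
    using finite_subset[OF support_f assms(2)] .
  moreover have "x = (\<Sum>g\<in>{g. f g \<noteq> 0}. f g)"
    unfolding assms(5) by (rule sum.mono_neutral_right[OF assms(2) support_f]) simp
  moreover have "\<exists>!f. finite {g. f g \<noteq> 0} \<and> (\<forall>g. f g \<in> S g) \<and> x = (\<Sum>g\<in>{g. f g \<noteq> 0}. f g)"
    using assms(1) unfolding graded_ring_def by blast
  ultimately show ?thesis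
    unfolding component_def using assms(3) by (intro the1_equality) auto
qed

lemma component_diff:
  assumes "graded_ring S"
  shows "component S (x - y) g = component S x g - component S y g"
proof -
  define A where "A = {g. component S x g \<noteq> 0} \<union> {g. component S y g \<noteq> 0}"
  have "finite A"
    unfolding A_def using component_props(1)[OF assms] by blast
  then have "x - y = (\<Sum>g\<in>A. component S x g - component S y g)"
    using sum_components[OF assms, of A x] sum_components[OF assms, of A y]
    by (simp add: sum_subtractf A_def)
  moreover have "component S x g - component S y g \<in> S g" for g
    using additive_subgroup_diff[OF graded_ring_additive_subgroup[OF assms]]
      component_props(2)[OF assms] by blast
  ultimately have "component S (x - y) = (\<lambda>g. component S x g - component S y g)"
    using component_eqI[OF assms \<open>finite A\<close>] unfolding A_def by auto
  then show ?thesis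
    by simp
qed

lemma component_additive_map:
  fixes \<phi> :: "'a::ring_1 \<Rightarrow> 'a"
  assumes "graded_ring S" "\<And>a b. \<phi> (a + b) = \<phi> a + \<phi> b" "\<And>g a. a \<in> S g \<Longrightarrow> \<phi> a \<in> S g"
  shows "component S (\<phi> x) g = \<phi> (component S x g)"
proof -
  define A where "A = {g. component S x g \<noteq> 0}"
  have "finite A"
    unfolding A_def using component_props(1)[OF assms(1)] .
  have "\<phi> 0 = 0"
    using assms(2)[of 0 0] by simp
  have "\<phi> x = \<phi> (\<Sum>g\<in>A. component S x g)"
    using sum_components[OF assms(1) \<open>finite A\<close>, of x] unfolding A_def by simp
  also have "\<dots> = (\<Sum>g\<in>A. \<phi> (component S x g))"
    using sum_comp_morphism[of \<phi> "component S x" A] \<open>\<phi> 0 = 0\<close> assms(2)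
    by (simp add: comp_def)
  finally have "\<phi> x = (\<Sum>g\<in>A. \<phi> (component S x g))" .
  then have "component S (\<phi> x) = (\<lambda>g. \<phi> (component S x g))"
    using component_eqI[OF assms(1) \<open>finite A\<close>] assms(3) component_props(2)[OF assms(1)]
      \<open>\<phi> 0 = 0\<close> unfolding A_def by auto
  then show ?thesis
    by simp
qed

lemma component_mult_left:
  assumes "graded_ring S" "r \<in> S 0"
  shows "component S (r * x) g = r * component S x g"
  using component_additive_map[OF assms(1), of "(*) r"] graded_ring_mult[OF assms]
  by (simp add: distrib_left)

lemma component_mult_right:
  assumes "graded_ring S" "r \<in> S 0"
  shows "component S (x * r) g = component S x g * r"
  using component_additive_map[OF assms(1), of "\<lambda>a. a * r"] graded_ring_mult[OF assms(1) _ assms(2)]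
  by (simp add: distrib_right)

lemma eq_0_if_components_on_support_eq_0:
  assumes "graded_ring S" "\<forall>g\<in>support S. component S x g = 0"
  shows "x = 0"
proof -
  have "component S x g = 0" for g
    using assms component_props(2)[OF assms(1), of x g] unfolding support_def by blast
  then show ?thesis
    using component_props(3)[OF assms(1), of x] by simp
qed

lemma setmul_induct:
  assumes "x \<in> setmul A B" "P 0" "\<And>u v. P u \<Longrightarrow> P v \<Longrightarrow> P (u + v)"
    and "\<And>a b. a \<in> A \<Longrightarrow> b \<in> B \<Longrightarrow> P (a * b)"
  shows "P x"
proof -
  obtain n :: nat and a b where ab: "\<forall>i<n. a i \<in> A \<and> b i \<in> B" and x: "x = (\<Sum>i<n. a i * b i)"
    using assms(1) unfolding setmul_def by blast
  have "P (\<Sum>i<m. a i * b i)" if "m \<le> n" for m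
    using that
  proof (induction m)
    case 0
    then show ?case
      using assms(2) by simp
  next
    case (Suc m)
    then show ?case
      using ab assms(3,4) by simp
  qed
  then show ?thesis
    using x by simp
qed

lemma mult_mem_setmul: "a \<in> A \<Longrightarrow> b \<in> B \<Longrightarrow> a * b \<in> setmul A B"
  unfolding setmul_def by (rule CollectI, rule exI[of _ 1]) auto

text \<open>Since S_g = S_g S_{-g} S_g by condition (a), the identities of the ideals S_{-g} S_g and
  S_g S_{-g} act on S_g as a right and as a left identity, respectively.\<close>

lemma epsilon_strongly_graded_right_unit:
  assumes "epsilon_strongly_graded S" "\<And>z. z \<in> setmul (S (- g)) (S g) \<Longrightarrow> z * u = z"
    and "s \<in> S g"
  shows "s * u = s"
proof -
  have "s \<in> setmul (setmul (S g) (S (- g))) (S g)"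
    using assms(1,3) unfolding epsilon_strongly_graded_def by blast
  then show ?thesis
  proof (rule setmul_induct)
    fix a b assume "a \<in> setmul (S g) (S (- g))" "b \<in> S g"
    from this(1) show "a * b * u = a * b"
    proof (rule setmul_induct)
      fix x y assume "x \<in> S g" "y \<in> S (- g)"
      then have "y * b * u = y * b"
        using assms(2) mult_mem_setmul \<open>b \<in> S g\<close> by blast
      then show "x * y * b * u = x * y * b"
        by (simp add: mult.assoc)
    qed (simp_all add: distrib_right)
  qed (simp_all add: distrib_right)
qed

lemma epsilon_strongly_graded_left_unit:
  assumes "epsilon_strongly_graded S" "\<And>z. z \<in> setmul (S g) (S (- g)) \<Longrightarrow> u * z = z"
    and "s \<in> S g"
  shows "u * s = s"
proof -
  have "s \<in> setmul (setmul (S g) (S (- g))) (S g)"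
    using assms(1,3) unfolding epsilon_strongly_graded_def by blast
  then show ?thesis
  proof (rule setmul_induct)
    fix a b assume "a \<in> setmul (S g) (S (- g))" "b \<in> S g"
    then show "u * (a * b) = a * b"
      using assms(2) by (simp add: mult.assoc[symmetric])
  qed (simp_all add: distrib_left)
qed

lemma ex_finite_set_separating_right_mult:
  assumes "epsilon_strongly_graded S"
  shows "\<exists>C. finite C \<and> C \<subseteq> S (- g) \<and> (\<forall>s\<in>S g. (\<forall>c\<in>C. s * c = 0) \<longrightarrow> s = 0)"
proof -
  have "has_mult_identity (setmul (S (- g)) (S (- (- g))))"
    using assms unfolding epsilon_strongly_graded_def by blast
  then obtain u where u: "u \<in> setmul (S (- g)) (S g)"
    and u_unit: "\<And>z. z \<in> setmul (S (- g)) (S g) \<Longrightarrow> z * u = z"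
    unfolding has_mult_identity_def by auto
  obtain n :: nat and c d where cd: "\<forall>i<n. c i \<in> S (- g) \<and> d i \<in> S g"
    and u_sum: "u = (\<Sum>i<n. c i * d i)"
    using u unfolding setmul_def by blast
  have "s = 0" if "s \<in> S g" "\<forall>c'\<in>c ` {..<n}. s * c' = 0" for s
  proof -
    have "s = s * u"
      using epsilon_strongly_graded_right_unit[OF assms u_unit \<open>s \<in> S g\<close>] by simp
    also have "\<dots> = (\<Sum>i<n. (s * c i) * d i)"
      unfolding u_sum by (simp add: sum_distrib_left mult.assoc)
    also have "\<dots> = 0"
      using that(2) by simp
    finally show ?thesis .
  qed
  moreover have "c ` {..<n} \<subseteq> S (- g)"
    using cd by blast
  ultimately show ?thesis
    by blast
qed

lemma ex_finite_set_separating_left_mult: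
  assumes "epsilon_strongly_graded S"
  shows "\<exists>D. finite D \<and> D \<subseteq> S (- g) \<and> (\<forall>s\<in>S g. (\<forall>d\<in>D. d * s = 0) \<longrightarrow> s = 0)"
proof -
  have "has_mult_identity (setmul (S g) (S (- g)))"
    using assms unfolding epsilon_strongly_graded_def by blast
  then obtain u where u: "u \<in> setmul (S g) (S (- g))"
    and u_unit: "\<And>z. z \<in> setmul (S g) (S (- g)) \<Longrightarrow> u * z = z"
    unfolding has_mult_identity_def by auto
  obtain n :: nat and c d where cd: "\<forall>i<n. c i \<in> S g \<and> d i \<in> S (- g)"
    and u_sum: "u = (\<Sum>i<n. c i * d i)"
    using u unfolding setmul_def by blast
  have "s = 0" if "s \<in> S g" "\<forall>d'\<in>d ` {..<n}. d' * s = 0" for s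
  proof -
    have "s = u * s"
      using epsilon_strongly_graded_left_unit[OF assms u_unit \<open>s \<in> S g\<close>] by simp
    also have "\<dots> = (\<Sum>i<n. c i * (d i * s))"
      unfolding u_sum by (simp add: sum_distrib_right mult.assoc)
    also have "\<dots> = 0"
      using that(2) by simp
    finally show ?thesis .
  qed
  moreover have "d ` {..<n} \<subseteq> S (- g)"
    using cd by blast
  ultimately show ?thesis
    by blast
qed

lemma left_artinian_if_principal_component_left_artinian:
  fixes S :: "'g::group_add \<Rightarrow> 'a::ring_1 set"
  assumes eps: "epsilon_strongly_graded S" and "finite (support S)" and "left_artinian (S 0)"
  shows "left_artinian (UNIV :: 'a set)"
proof -
  have gr: "graded_ring S"
    using eps unfolding epsilon_strongly_graded_def by blast
  obtain C where C: "\<And>g. finite (C g)" "\<And>g. C g \<subseteq> S (- g)"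
    and separating: "\<And>g s. s \<in> S g \<Longrightarrow> \<forall>c\<in>C g. s * c = 0 \<Longrightarrow> s = 0"
    using ex_finite_set_separating_right_mult[OF eps] by metis
  define F where "F = (\<lambda>(g, c) x. component S x g * c) ` (SIGMA g:support S. C g)"
  have "finite F"
    unfolding F_def using assms(2) C(1) by auto
  have "component S x g * c \<in> S 0" if "c \<in> C g" for x g c
    using graded_ring_mult[OF gr component_props(2)[OF gr, of x g] C(2)[THEN subsetD, OF that]]
    by simp
  then have homs: "\<forall>f\<in>F. module_hom (S 0) (*) f \<and> range f \<subseteq> S 0"
    by (auto simp: F_def module_hom_def component_diff[OF gr] component_mult_left[OF gr]
        left_diff_distrib mult.assoc)
  have dcc_separated: "dcc (\<lambda>A. submodule (S 0) (*) A \<and> (\<forall>x\<in>A. (\<forall>f\<in>F. f x = 0) \<longrightarrow> x = 0))"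
    using assms(3) unfolding left_artinian_iff_dcc
    by (rule dcc_submodules_separated_by_homs[OF \<open>finite F\<close> _ homs]) simp
  have separated: "x = 0" if "\<forall>f\<in>F. f x = 0" for x
  proof (rule eq_0_if_components_on_support_eq_0[OF gr], intro ballI)
    fix g assume "g \<in> support S"
    then have "\<forall>c\<in>C g. component S x g * c = 0"
      using that unfolding F_def by auto
    then show "component S x g = 0"
      using separating component_props(2)[OF gr] by blast
  qed
  show ?thesis
    unfolding left_artinian_iff_dcc
    by (rule dcc_mono[OF dcc_separated]) (simp add: submodule_def separated)
qed

lemma right_artinian_if_principal_component_right_artinian:
  fixes S :: "'g::group_add \<Rightarrow> 'a::ring_1 set"
  assumes eps: "epsilon_strongly_graded S" and "finite (support S)" and "right_artinian (S 0)"
  shows "right_artinian (UNIV :: 'a set)"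
proof -
  have gr: "graded_ring S"
    using eps unfolding epsilon_strongly_graded_def by blast
  obtain D where D: "\<And>g. finite (D g)" "\<And>g. D g \<subseteq> S (- g)"
    and separating: "\<And>g s. s \<in> S g \<Longrightarrow> \<forall>d\<in>D g. d * s = 0 \<Longrightarrow> s = 0"
    using ex_finite_set_separating_left_mult[OF eps] by metis
  define F where "F = (\<lambda>(g, d) x. d * component S x g) ` (SIGMA g:support S. D g)"
  have "finite F"
    unfolding F_def using assms(2) D(1) by auto
  have "d * component S x g \<in> S 0" if "d \<in> D g" for x g d
    using graded_ring_mult[OF gr D(2)[THEN subsetD, OF that] component_props(2)[OF gr, of x g]]
    by simp
  then have homs: "\<forall>f\<in>F. module_hom (S 0) (\<lambda>r x. x * r) f \<and> range f \<subseteq> S 0"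
    by (auto simp: F_def module_hom_def component_diff[OF gr] component_mult_right[OF gr]
        right_diff_distrib mult.assoc)
  have dcc_separated: "dcc (\<lambda>A. submodule (S 0) (\<lambda>r x. x * r) A \<and> (\<forall>x\<in>A. (\<forall>f\<in>F. f x = 0) \<longrightarrow> x = 0))"
    using assms(3) unfolding right_artinian_iff_dcc
    by (rule dcc_submodules_separated_by_homs[OF \<open>finite F\<close> _ homs]) simp
  have separated: "x = 0" if "\<forall>f\<in>F. f x = 0" for x
  proof (rule eq_0_if_components_on_support_eq_0[OF gr], intro ballI)
    fix g assume "g \<in> support S"
    then have "\<forall>d\<in>D g. d * component S x g = 0"
      using that unfolding F_def by auto
    then show "component S x g = 0"
      using separating component_props(2)[OF gr] by blast
  qed
  show ?thesis
    unfolding right_artinian_iff_dcc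
    by (rule dcc_mono[OF dcc_separated]) (simp add: submodule_def separated)
qed

theorem proposition3p9:
  fixes S :: "'g::group_add \<Rightarrow> 'a::ring_1 set"
  assumes "epsilon_strongly_graded S"
    and "finite (support S)"
  shows "(left_artinian (S 0) \<longrightarrow> left_artinian (UNIV :: 'a set)) \<and>
         (right_artinian (S 0) \<longrightarrow> right_artinian (UNIV :: 'a set))"
  using left_artinian_if_principal_component_left_artinian[OF assms]
    right_artinian_if_principal_component_right_artinian[OF assms] by blast

end
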